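(* Let $a, b \in \mathbb{R}$, $m, p \in \mathbb{R}^{+}$ and $k \in \mathbb{N}$. Define $$\mathcal{G}(k,m,a,b,p) = \int_0^\infty x^{k-1} Q_m(a, b\sqrt{x})\, e^{-px}\,{\rm d}x .$$ Then $$\mathcal{G}(k,m,a,b,p) = \frac{\Gamma(k)}{p^k} - \frac{\Gamma(k)\, b^{2m} e^{-\frac{a^2}{2}}}{p^k (b^2+2p)^m}\sum_{l=0}^{k-1}\frac{(m)_l (2p)^l}{l!\,(b^2+2p)^l}\, {}_1F_1\!\left(l+m; m; \frac{a^2b^2}{2b^2+4p}\right).$$
   Context: $Q_m(\alpha,\beta)$ is the generalized Marcum $Q$-function of (real, positive) order $m$, $Q_m(\alpha,\beta) = \alpha^{1-m}\int_\beta^\infty t^{m} e^{-(t^2+\alpha^2)/2} I_{m-1}(\alpha t)\,{\rm d}t$ (with the limiting value for $\alpha=0$), where $I_{\nu}$ is the modified Bessel function of the first kind. $\Gamma$ is the Euler Gamma function, $(x)_n=\Gamma(x+n)/\Gamma(x)$ is the Pochhammer symbol, and ${}_1F_1(\alpha;\gamma;z)=\sum_{l\ge 0}\frac{(\alpha)_l}{(\gamma)_l}\frac{z^l}{l!}$ is the Kummer confluent hypergeometric function. *)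

theory Defs
  imports "HOL-Analysis.Analysis"
begin

definition bessel_I :: "real \<Rightarrow> real \<Rightarrow> real" where
  "bessel_I \<nu> z = (\<Sum>j. (z / 2) powr (2 * real j + \<nu>) / (fact j * Gamma (real j + \<nu> + 1)))"

text \<open>Generalized Marcum Q-function of real positive order m, literal integral for alpha > 0,
  limiting value at alpha = 0. The arguments enter through their absolute values
  (Q_m is defined for alpha, beta >= 0; the paper's formula depends only on a^2, b^2).\<close>
definition marcum_Q_pos :: "real \<Rightarrow> real \<Rightarrow> real \<Rightarrow> real" where
  "marcum_Q_pos m \<alpha> \<beta> =
     \<alpha> powr (1 - m) *
       (LINT t:{\<beta>..}|lborel. t powr m * exp (-(t\<^sup>2 + \<alpha>\<^sup>2) / 2) * bessel_I (m - 1) (\<alpha> * t))"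

definition marcum_Q :: "real \<Rightarrow> real \<Rightarrow> real \<Rightarrow> real" where
  "marcum_Q m \<alpha> \<beta> =
     (if \<alpha> = 0 then Lim (at_right 0) (\<lambda>\<alpha>'. marcum_Q_pos m \<alpha>' \<bar>\<beta>\<bar>)
      else marcum_Q_pos m \<bar>\<alpha>\<bar> \<bar>\<beta>\<bar>)"

definition hyp1F1 :: "real \<Rightarrow> real \<Rightarrow> real \<Rightarrow> real" where
  "hyp1F1 \<alpha> \<gamma> z = (\<Sum>l. pochhammer \<alpha> l / pochhammer \<gamma> l * z ^ l / fact l)"

end

theory Submission
  imports Defs "HOL-Probability.Probability" "HOL-Real_Asymp.Real_Asymp"
begin

text \<open>
  Expanding the Bessel function termwise shows that \<open>Q_m(\<alpha>, \<beta>)\<close> is a Poisson mixture: with the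
  Poisson weights \<open>e^(-c) c^j / j!\<close>, \<open>c = \<alpha>\<^sup>2/2\<close>, it averages the regularised upper incomplete
  Gamma functions \<open>\<Gamma>(j + m, \<beta>\<^sup>2/2) / \<Gamma>(j + m)\<close>.
  In the transform of \<open>\<Gamma>(n, B x)\<close> against \<open>x^(k-1) e^(-p x)\<close>, Tonelli turns the integral over \<open>x\<close>
  into an Erlang distribution function inside a Gamma integral. The complement of the Erlang
  distribution function is a finite Poisson sum, and integrating a Poisson term against
  \<open>u^(n-1) e^(-u)\<close> gives a negative binomial weight. Finally, the negative binomial weights summed
  against the Poisson mixture over \<open>j\<close> are exactly the Kummer series \<open>1F1(l + m; m; z)\<close>.
\<close>

section \<open>Upper incomplete Gamma function\<close>

definition gamma_kernel :: "real \<Rightarrow> real \<Rightarrow> real" where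
  "gamma_kernel s u = (if 0 < u then u powr (s - 1) * exp (- u) else 0)"

lemma gamma_kernel_nonneg: "gamma_kernel s u \<ge> 0"
  by (simp add: gamma_kernel_def)

lemma gamma_kernel_measurable [measurable]: "gamma_kernel s \<in> borel_measurable borel"
  unfolding gamma_kernel_def by measurable

lemma nn_integral_powr_exp_scaled:
  assumes s: "s > 0" and l: "l > 0"
  shows "(\<integral>\<^sup>+u. ennreal (if 0 < u then u powr (s - 1) * exp (- l * u) else 0) \<partial>lborel)
     = ennreal (Gamma s / l powr s)"
proof -
  let ?f = "\<lambda>u. ennreal (if 0 < u then u powr (s - 1) * exp (- l * u) else 0)"
  have "(\<integral>\<^sup>+u. ?f u \<partial>lborel) = ennreal \<bar>1/l\<bar> * (\<integral>\<^sup>+x. ?f (0 + (1/l) * x) \<partial>lborel)"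
    by (rule nn_integral_real_affine) (use l in auto)
  also have "(\<lambda>x. ?f (0 + (1/l) * x))
      = (\<lambda>x. ennreal (l powr (1 - s)) * ennreal (indicator {0..} x * x powr (s - 1) / exp x))"
  proof
    fix x
    show "?f (0 + (1/l) * x) = ennreal (l powr (1 - s)) * ennreal (indicator {0..} x * x powr (s - 1) / exp x)"
    proof (cases "x > 0")
      case True
      have "(x / l) powr (s - 1) = l powr (1 - s) * x powr (s - 1)"
        using True l by (simp add: powr_divide powr_diff field_simps powr_minus)
      then show ?thesis
        using True l by (simp add: ennreal_mult'[symmetric] exp_minus field_simps)
    next
      case False
      then show ?thesis
        using l by (cases "x = 0") (auto simp: indicator_def zero_less_divide_iff)
    qed
  qed
  also have "(\<integral>\<^sup>+x. ennreal (l powr (1 - s)) * ennreal (indicator {0..} x * x powr (s - 1) / exp x) \<partial>lborel)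
     = ennreal (l powr (1 - s)) * ennreal (Gamma s)"
    by (subst nn_integral_cmult) (auto simp: Gamma_conv_nn_integral_real[OF s])
  also have "ennreal \<bar>1/l\<bar> * (ennreal (l powr (1 - s)) * ennreal (Gamma s)) = ennreal (Gamma s / l powr s)"
    using l s by (simp add: ennreal_mult'[symmetric] Gamma_real_pos less_imp_le powr_diff field_simps)
  finally show ?thesis .
qed

\<comment> \<open>Valued in \<open>ennreal\<close>, so that Tonelli's theorem applies to it without integrability side conditions.\<close>
definition upper_Gamma :: "real \<Rightarrow> real \<Rightarrow> ennreal" where
  "upper_Gamma s y = (\<integral>\<^sup>+u. ennreal (gamma_kernel s u) * indicator {y..} u \<partial>lborel)"

lemma nn_integral_gamma_kernel: "s > 0 \<Longrightarrow> (\<integral>\<^sup>+u. ennreal (gamma_kernel s u) \<partial>lborel) = ennreal (Gamma s)"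
  using nn_integral_powr_exp_scaled[of s 1] by (simp add: gamma_kernel_def cong: if_cong)

lemma upper_Gamma_le_Gamma: "s > 0 \<Longrightarrow> upper_Gamma s y \<le> ennreal (Gamma s)"
  unfolding upper_Gamma_def nn_integral_gamma_kernel[symmetric]
  by (intro nn_integral_mono) (auto simp: indicator_def)

lemma upper_Gamma_nonpos: "s > 0 \<Longrightarrow> y \<le> 0 \<Longrightarrow> upper_Gamma s y = ennreal (Gamma s)"
  unfolding upper_Gamma_def nn_integral_gamma_kernel[symmetric]
  by (intro nn_integral_cong) (auto simp: indicator_def gamma_kernel_def)

lemma upper_Gamma_finite: "s > 0 \<Longrightarrow> upper_Gamma s y \<noteq> \<top>"
  using upper_Gamma_le_Gamma[of s y] by (auto simp: top_unique)

lemma upper_Gamma_measurable [measurable]: "upper_Gamma s \<in> borel_measurable borel"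
proof -
  have "(\<lambda>(y::real, u::real). ennreal (gamma_kernel s u) * indicator {y..} u)
      = (\<lambda>z. ennreal (gamma_kernel s (snd z)) * (if fst z \<le> snd z then 1 else 0))"
    by (auto simp: indicator_def fun_eq_iff)
  also have "\<dots> \<in> borel_measurable (borel \<Otimes>\<^sub>M lborel)"
    by measurable
  finally show ?thesis
    unfolding upper_Gamma_def[abs_def] by (rule lborel.borel_measurable_nn_integral)
qed

lemma nn_integral_atLeast_eq_SUP:
  fixes f :: "real \<Rightarrow> real" and g :: "nat \<Rightarrow> real"
  assumes [measurable]: "f \<in> borel_measurable borel"
    and "mono g" and "filterlim g at_top sequentially"
  shows "(\<integral>\<^sup>+x. ennreal (f x) * indicator {a..} x \<partial>lborel)
    = (SUP n. \<integral>\<^sup>+x. ennreal (f x) * indicator {a..g n} x \<partial>lborel)"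
proof -
  have "(SUP n. ennreal (f x) * indicator {a..g n} x) = ennreal (f x) * indicator {a..} x" for x
  proof (rule LIMSEQ_unique[OF LIMSEQ_SUP])
    have "eventually (\<lambda>n. x \<le> g n) sequentially"
      using assms(3) by (simp add: filterlim_at_top)
    then have "eventually (\<lambda>n. ennreal (f x) * indicator {a..g n} x = ennreal (f x) * indicator {a..} x) sequentially"
      by eventually_elim (auto split: split_indicator)
    then show "(\<lambda>n. ennreal (f x) * indicator {a..g n} x) \<longlonglongrightarrow> ennreal (f x) * indicator {a..} x"
      by (rule tendsto_eventually)
  next
    show "incseq (\<lambda>n. ennreal (f x) * indicator {a..g n} x)"
      using assms(2) by (auto simp: incseq_def mono_def split: split_indicator dest: order_trans)
  qed
  then have "(\<integral>\<^sup>+x. ennreal (f x) * indicator {a..} x \<partial>lborel)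
      = (\<integral>\<^sup>+x. (SUP n. ennreal (f x) * indicator {a..g n} x) \<partial>lborel)"
    by simp
  also have "\<dots> = (SUP n. \<integral>\<^sup>+x. ennreal (f x) * indicator {a..g n} x \<partial>lborel)"
    using assms(2)
    by (intro nn_integral_monotone_convergence_SUP)
       (auto simp: incseq_def le_fun_def mono_def split: split_indicator dest: order_trans)
  finally show ?thesis .
qed

lemma nn_integral_half_square_subst:
  fixes f :: "real \<Rightarrow> real"
  assumes [measurable]: "f \<in> borel_measurable borel"
  shows "(\<integral>\<^sup>+t. ennreal (f (t\<^sup>2/2) * t) * indicator {0..} t \<partial>lborel)
       = (\<integral>\<^sup>+u. ennreal (f u) * indicator {0..} u \<partial>lborel)"
proof -
  have "(\<integral>\<^sup>+t. ennreal (f (t\<^sup>2/2) * t) * indicator {0..real n} t \<partial>lborel)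
      = (\<integral>\<^sup>+u. ennreal (f u) * indicator {0..(real n)\<^sup>2/2} u \<partial>lborel)" for n :: nat
    using nn_integral_substitution[where f = f and a = 0 and b = "real n" and g = "\<lambda>t. t\<^sup>2/2" and g' = "\<lambda>t. t"]
    by (force simp: set_borel_measurable_def intro!: derivative_eq_intros continuous_intros
        simp flip: ennreal_mult'' ennreal_indicator)
  moreover have "mono (\<lambda>n. (real n)\<^sup>2/2)"
    by (auto simp: mono_def intro!: power_mono)
  moreover have "filterlim (\<lambda>n. (real n)\<^sup>2/2) at_top sequentially"
    by real_asymp
  ultimately show ?thesis
    using nn_integral_atLeast_eq_SUP[where f = f and g = "\<lambda>n. (real n)\<^sup>2/2" and a = 0]
      nn_integral_atLeast_eq_SUP[where f = "\<lambda>t. f (t\<^sup>2/2) * t" and g = real and a = 0]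
    by (simp add: mono_def filterlim_real_sequentially)
qed

lemma powr_half_square:
  fixes t n :: real
  assumes "t > 0"
  shows "2 powr (n - 1) * (t\<^sup>2/2) powr (n - 1) * t = t powr (2*n - 1)"
proof -
  have "(t\<^sup>2/2) powr (n - 1) = (t powr 2) powr (n - 1) / 2 powr (n - 1)"
    using assms by (simp add: powr_divide powr_realpow)
  also have "(t powr 2) powr (n - 1) = t powr (2*n - 2)"
    by (simp add: powr_powr algebra_simps)
  moreover have "t powr (2*n - 2) * t = t powr (2*n - 1)"
    using powr_mult_base[of t "2*n - 2"] assms by (simp add: algebra_simps)
  ultimately show ?thesis
    by simp
qed

lemma nn_integral_powr_exp_half_square:
  assumes "\<beta> \<ge> 0"
  shows "(\<integral>\<^sup>+t. ennreal (t powr (2*n - 1) * exp (- t\<^sup>2/2)) * indicator {\<beta>..} t \<partial>lborel)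
       = ennreal (2 powr (n - 1)) * upper_Gamma n (\<beta>\<^sup>2/2)"
proof -
  define f where "f u = 2 powr (n - 1) * gamma_kernel n u * indicator {\<beta>\<^sup>2/2..} u" for u
  have [measurable]: "f \<in> borel_measurable borel"
    unfolding f_def by measurable
  have "ennreal (t powr (2*n - 1) * exp (- t\<^sup>2/2)) * indicator {\<beta>..} t
      = ennreal (f (t\<^sup>2/2) * t) * indicator {0..} t" for t
  proof (cases "t > 0")
    case True
    have "\<beta> \<le> t \<longleftrightarrow> \<beta>\<^sup>2/2 \<le> t\<^sup>2/2"
      using True assms by (simp add: power2_le_iff_abs_le)
    moreover have "f (t\<^sup>2/2) * t = 2 powr (n - 1) * (t\<^sup>2/2) powr (n - 1) * t * exp (- t\<^sup>2/2) * indicator {\<beta>\<^sup>2/2..} (t\<^sup>2/2)"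
      using True by (simp add: f_def gamma_kernel_def)
    ultimately show ?thesis
      using True by (simp add: powr_half_square indicator_def)
  next
    case False
    then show ?thesis
      using assms by (cases "t = 0") (auto simp: indicator_def)
  qed
  then have "(\<integral>\<^sup>+t. ennreal (t powr (2*n - 1) * exp (- t\<^sup>2/2)) * indicator {\<beta>..} t \<partial>lborel)
      = (\<integral>\<^sup>+u. ennreal (f u) * indicator {0..} u \<partial>lborel)"
    by (simp add: nn_integral_half_square_subst)
  also have "\<dots> = (\<integral>\<^sup>+u. ennreal (2 powr (n - 1)) * (ennreal (gamma_kernel n u) * indicator {\<beta>\<^sup>2/2..} u) \<partial>lborel)"
    by (intro nn_integral_cong)
       (auto simp: f_def indicator_def ennreal_mult' gamma_kernel_nonneg gamma_kernel_def)
  also have "\<dots> = ennreal (2 powr (n - 1)) * upper_Gamma n (\<beta>\<^sup>2/2)"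
    unfolding upper_Gamma_def by (rule nn_integral_cmult) measurable
  finally show ?thesis .
qed

section \<open>The Marcum Q-function as a Poisson mixture\<close>

definition marcum_weight :: "real \<Rightarrow> real \<Rightarrow> nat \<Rightarrow> real" where
  "marcum_weight m \<alpha> j = exp (- \<alpha>\<^sup>2/2) * (\<alpha>\<^sup>2/2)^j / (fact j * Gamma (real j + m))"

lemma marcum_weight_nonneg: "m > 0 \<Longrightarrow> marcum_weight m \<alpha> j \<ge> 0"
  unfolding marcum_weight_def by (simp add: Gamma_real_pos less_imp_le)

lemma marcum_integrand_term_eq:
  fixes \<alpha> t m :: real
  assumes \<alpha>: "\<alpha> > 0" and t: "t > 0"
  shows "\<alpha> powr (1-m) * (t powr m * exp (-(t\<^sup>2+\<alpha>\<^sup>2)/2) * ((\<alpha>*t/2) powr (2*real j + (m-1)) / (fact j * Gamma (real j + (m-1) + 1))))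
    = marcum_weight m \<alpha> j / 2 powr (real j + m - 1) * (t powr (2*(real j + m) - 1) * exp (- t\<^sup>2/2))"
proof -
  \<comment> \<open>Write both sides as \<open>exp\<close> of a linear combination of \<open>ln \<alpha>\<close>, \<open>ln t\<close> and \<open>ln 2\<close>.\<close>
  have Gamma_shift: "Gamma (real j + (m-1) + 1) = Gamma (real j + m)" by (simp add: algebra_simps)
  have powr_exp_ln: "\<alpha> powr (1-m) = exp ((1-m) * ln \<alpha>)" "t powr m = exp (m * ln t)"
     "(\<alpha>*t/2) powr (2*real j + (m-1)) = exp ((2*real j + (m-1)) * (ln \<alpha> + ln t - ln 2))"
     "2 powr (real j + m - 1) = exp ((real j + m - 1) * ln 2)"
     "t powr (2*(real j + m) - 1) = exp ((2*(real j + m) - 1) * ln t)"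
    using \<alpha> t by (simp_all add: powr_def ln_mult ln_div)
  have power_exp_ln: "(\<alpha>\<^sup>2/2)^j = exp (real j * (2 * ln \<alpha> - ln 2))"
  proof -
    have "exp (2 * ln \<alpha>) = \<alpha> powr 2" using \<alpha> by (simp add: powr_def)
    also have "\<dots> = \<alpha>\<^sup>2" using \<alpha> by (simp add: powr_realpow)
    finally have "\<alpha>\<^sup>2/2 = exp (2 * ln \<alpha> - ln 2)" by (simp add: exp_diff)
    then show ?thesis by (simp add: exp_of_nat_mult)
  qed
  have lhs: "\<alpha> powr (1-m) * (t powr m * exp (-(t\<^sup>2+\<alpha>\<^sup>2)/2) * ((\<alpha>*t/2) powr (2*real j + (m-1)) / (fact j * Gamma (real j + (m-1) + 1))))
     = exp ((1-m) * ln \<alpha> + m * ln t + (-(t\<^sup>2+\<alpha>\<^sup>2)/2) + (2*real j + (m-1)) * (ln \<alpha> + ln t - ln 2)) / (fact j * Gamma (real j + m))"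
    unfolding powr_exp_ln Gamma_shift by (simp add: exp_add)
  have rhs: "marcum_weight m \<alpha> j / 2 powr (real j + m - 1) * (t powr (2*(real j + m) - 1) * exp (- t\<^sup>2/2))
     = exp (- \<alpha>\<^sup>2/2) * exp (real j * (2 * ln \<alpha> - ln 2)) * exp ((2*(real j + m) - 1) * ln t) * exp (- t\<^sup>2/2) / (exp ((real j + m - 1) * ln 2) * (fact j * Gamma (real j + m)))"
    unfolding powr_exp_ln marcum_weight_def power_exp_ln by (simp add: mult_ac)
  have rhs_exp: "exp (- \<alpha>\<^sup>2/2) * exp (real j * (2 * ln \<alpha> - ln 2)) * exp ((2*(real j + m) - 1) * ln t) * exp (- t\<^sup>2/2)
     = exp (- \<alpha>\<^sup>2/2 + real j * (2 * ln \<alpha> - ln 2) + (2*(real j + m) - 1) * ln t + (- t\<^sup>2/2))"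
    by (simp only: exp_add)
  note rhs = rhs[unfolded rhs_exp]
  have exponents: "(1-m) * ln \<alpha> + m * ln t + (-(t\<^sup>2+\<alpha>\<^sup>2)/2) + (2*real j + (m-1)) * (ln \<alpha> + ln t - ln 2)
     = (- \<alpha>\<^sup>2/2 + real j * (2 * ln \<alpha> - ln 2) + (2*(real j + m) - 1) * ln t + (- t\<^sup>2/2)) - (real j + m - 1) * ln 2"
    by (simp add: algebra_simps add_divide_distrib diff_divide_distrib)
  show ?thesis
    unfolding lhs rhs exponents exp_diff by simp
qed


lemma summable_bessel_I_series:
  assumes z: "z > 0" and \<nu>: "\<nu> > -1"
  shows "summable (\<lambda>j. (z/2) powr (2 * real j + \<nu>) / (fact j * Gamma (real j + \<nu> + 1)))"
proof -
  define w where "w = z/2"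
  have w: "w > 0"
    using z by (simp add: w_def)
  define f where "f j = w powr (2 * real j + \<nu>) / (fact j * Gamma (real j + \<nu> + 1))" for j
  have f_pos: "f j > 0" for j
    unfolding f_def using w \<nu> by (intro divide_pos_pos mult_pos_pos Gamma_real_pos) auto
  have f_Suc: "f (Suc j) = f j * (w\<^sup>2 / ((real j + 1) * (real j + \<nu> + 1)))" for j
  proof -
    have "w powr (2 * real (Suc j) + \<nu>) = w powr (2 * real j + \<nu>) * w powr 2"
      by (simp add: powr_add[symmetric] algebra_simps)
    also have "w powr 2 = w\<^sup>2"
      using w by (simp add: powr_realpow)
    finally have power: "w powr (2 * real (Suc j) + \<nu>) = w powr (2 * real j + \<nu>) * w\<^sup>2" .
    have "real j + \<nu> + 1 \<notin> \<int>\<^sub>\<le>\<^sub>0"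
      using \<nu> nonpos_Ints_nonpos[of "real j + \<nu> + 1"] by linarith
    then have "Gamma ((real j + \<nu> + 1) + 1) = (real j + \<nu> + 1) * Gamma (real j + \<nu> + 1)"
      by (rule Gamma_plus1)
    then have Gamma: "Gamma (real (Suc j) + \<nu> + 1) = (real j + \<nu> + 1) * Gamma (real j + \<nu> + 1)"
      by (simp add: algebra_simps)
    show ?thesis
      unfolding f_def power Gamma by (simp add: field_simps)
  qed
  define N where "N = nat \<lceil>2 * w\<^sup>2\<rceil> + 1"
  show ?thesis
    unfolding w_def[symmetric] f_def[symmetric]
  proof (rule summable_ratio_test[of "1/2" N])
    fix j
    assume "N \<le> j"
    then have j: "real j \<ge> 1" "2 * w\<^sup>2 \<le> real j"
      unfolding N_def by linarith+
    have "2 * w\<^sup>2 \<le> (real j + 1) * 1"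
      using j by simp
    also have "\<dots> \<le> (real j + 1) * (real j + \<nu> + 1)"
      using j \<nu> by (intro mult_left_mono) auto
    finally have "2 * w\<^sup>2 \<le> (real j + 1) * (real j + \<nu> + 1)" .
    moreover have "(real j + 1) * (real j + \<nu> + 1) > 0"
      using j \<nu> by (intro mult_pos_pos) auto
    ultimately have "w\<^sup>2 / ((real j + 1) * (real j + \<nu> + 1)) \<le> 1/2"
      by (simp add: field_simps)
    then have "f j * (w\<^sup>2 / ((real j + 1) * (real j + \<nu> + 1))) \<le> f j * (1/2)"
      using f_pos[of j] by (intro mult_left_mono) auto
    then show "norm (f (Suc j)) \<le> 1/2 * norm (f j)"
      using f_pos[of j] f_pos[of "Suc j"] f_Suc[of j] by (simp only: real_norm_def abs_of_pos)
  qed simp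
qed

lemma bessel_I_measurable [measurable]: "(\<lambda>t. bessel_I \<nu> (c * t)) \<in> borel_measurable borel"
  unfolding bessel_I_def by measurable

lemma sums_marcum_integrand:
  assumes m: "m > 0" and \<alpha>: "\<alpha> > 0" and t: "t \<ge> 0"
  shows "(\<lambda>j. marcum_weight m \<alpha> j / 2 powr (real j + m - 1) * (t powr (2 * (real j + m) - 1) * exp (- t\<^sup>2/2)))
    sums (\<alpha> powr (1 - m) * (t powr m * exp (- (t\<^sup>2 + \<alpha>\<^sup>2)/2) * bessel_I (m - 1) (\<alpha> * t)))"
proof (cases "t = 0")
  case True
  then show ?thesis
    using m by simp
next
  case False
  with t have t: "t > 0"
    by simp
  define b where "b j = (\<alpha> * t/2) powr (2 * real j + (m - 1)) / (fact j * Gamma (real j + (m - 1) + 1))" for j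
  have "b sums bessel_I (m - 1) (\<alpha> * t)"
    unfolding b_def bessel_I_def using \<alpha> t m
    by (intro summable_sums summable_bessel_I_series) auto
  from sums_mult[OF this, of "\<alpha> powr (1 - m) * (t powr m * exp (- (t\<^sup>2 + \<alpha>\<^sup>2)/2))"] show ?thesis
    using marcum_integrand_term_eq[OF \<alpha> t] by (simp add: b_def mult_ac)
qed

definition marcum_series :: "real \<Rightarrow> real \<Rightarrow> real \<Rightarrow> ennreal" where
  "marcum_series m \<alpha> y = (\<Sum>j. ennreal (marcum_weight m \<alpha> j) * upper_Gamma (real j + m) y)"

lemma marcum_series_measurable [measurable]:
  "f \<in> borel_measurable M \<Longrightarrow> (\<lambda>x. marcum_series m \<alpha> (f x)) \<in> borel_measurable M"
  unfolding marcum_series_def by measurable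

lemma marcum_Q_pos_eq_series:
  assumes m: "m > 0" and \<alpha>: "\<alpha> > 0" and \<beta>: "\<beta> \<ge> 0"
  shows "marcum_Q_pos m \<alpha> \<beta> = enn2real (marcum_series m \<alpha> (\<beta>\<^sup>2/2))"
proof -
  define g where "g t = \<alpha> powr (1 - m) * (t powr m * exp (- (t\<^sup>2 + \<alpha>\<^sup>2)/2) * bessel_I (m - 1) (\<alpha> * t))" for t
  define c where "c j t = marcum_weight m \<alpha> j / 2 powr (real j + m - 1) * (t powr (2 * (real j + m) - 1) * exp (- t\<^sup>2/2))" for j t
  have c_nonneg: "c j t \<ge> 0" for j t
    unfolding c_def using marcum_weight_nonneg[OF m] by simp
  have g_measurable [measurable]: "g \<in> borel_measurable borel"
    unfolding g_def by measurable
  have g_sums: "(\<lambda>j. c j t) sums g t" if "t \<ge> 0" for t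
    unfolding c_def g_def using sums_marcum_integrand[OF m \<alpha> that] .
  have g_nonneg: "g t \<ge> 0" if "t \<ge> 0" for t
    using sums_le[OF _ sums_zero g_sums[OF that]] c_nonneg by simp
  have "marcum_Q_pos m \<alpha> \<beta> = (\<integral>t. indicator {\<beta>..} t * g t \<partial>lborel)"
    unfolding marcum_Q_pos_def set_lebesgue_integral_def g_def integral_mult_right_zero[symmetric]
    by (intro arg_cong[where f = "integral\<^sup>L lborel"]) (auto simp: fun_eq_iff)
  also have "\<dots> = enn2real (\<integral>\<^sup>+t. ennreal (indicator {\<beta>..} t * g t) \<partial>lborel)"
    by (intro integral_eq_nn_integral) (use \<beta> g_nonneg in \<open>auto split: split_indicator\<close>)
  also have "(\<integral>\<^sup>+t. ennreal (indicator {\<beta>..} t * g t) \<partial>lborel)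
      = (\<integral>\<^sup>+t. (\<Sum>j. ennreal (c j t) * indicator {\<beta>..} t) \<partial>lborel)"
  proof (intro nn_integral_cong)
    fix t
    show "ennreal (indicator {\<beta>..} t * g t) = (\<Sum>j. ennreal (c j t) * indicator {\<beta>..} t)"
      using \<beta> suminf_ennreal_eq[OF c_nonneg g_sums] by (auto split: split_indicator)
  qed
  also have "\<dots> = (\<Sum>j. \<integral>\<^sup>+t. ennreal (c j t) * indicator {\<beta>..} t \<partial>lborel)"
    by (rule nn_integral_suminf) (simp add: c_def)
  also have "\<dots> = (\<Sum>j. ennreal (marcum_weight m \<alpha> j) * upper_Gamma (real j + m) (\<beta>\<^sup>2/2))"
  proof (intro suminf_cong)
    fix j
    have weight: "0 \<le> marcum_weight m \<alpha> j / 2 powr (real j + m - 1)"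
      using marcum_weight_nonneg[OF m] by simp
    have "(\<integral>\<^sup>+t. ennreal (c j t) * indicator {\<beta>..} t \<partial>lborel)
        = ennreal (marcum_weight m \<alpha> j / 2 powr (real j + m - 1))
          * (\<integral>\<^sup>+t. ennreal (t powr (2 * (real j + m) - 1) * exp (- t\<^sup>2/2)) * indicator {\<beta>..} t \<partial>lborel)"
      unfolding c_def ennreal_mult'[OF weight] mult.assoc
      by (rule nn_integral_cmult) measurable
    also have "\<dots> = ennreal (marcum_weight m \<alpha> j) * upper_Gamma (real j + m) (\<beta>\<^sup>2/2)"
      unfolding nn_integral_powr_exp_half_square[OF \<beta>] mult.assoc[symmetric]
      using marcum_weight_nonneg[OF m, of \<alpha> j] by (simp flip: ennreal_mult)
    finally show "(\<integral>\<^sup>+t. ennreal (c j t) * indicator {\<beta>..} t \<partial>lborel)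
        = ennreal (marcum_weight m \<alpha> j) * upper_Gamma (real j + m) (\<beta>\<^sup>2/2)" .
  qed
  finally show ?thesis
    unfolding marcum_series_def .
qed


definition regularized_upper_Gamma :: "real \<Rightarrow> real \<Rightarrow> real" where
  "regularized_upper_Gamma s y = enn2real (upper_Gamma s y) / Gamma s"

lemma regularized_upper_Gamma_bounds:
  assumes "s > 0"
  shows "0 \<le> regularized_upper_Gamma s y" and "regularized_upper_Gamma s y \<le> 1"
proof -
  have "enn2real (upper_Gamma s y) \<le> Gamma s"
    using upper_Gamma_le_Gamma[OF assms] assms by (simp add: enn2real_leI Gamma_real_pos less_imp_le)
  then show "0 \<le> regularized_upper_Gamma s y" and "regularized_upper_Gamma s y \<le> 1"
    using Gamma_real_pos[OF assms] by (auto simp: regularized_upper_Gamma_def)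
qed

lemma regularized_upper_Gamma_nonpos:
  assumes "s > 0" and "y \<le> 0"
  shows "regularized_upper_Gamma s y = 1"
proof -
  have "Gamma s \<noteq> 0"
    using Gamma_real_pos[OF assms(1)] by linarith
  then show ?thesis
    using assms by (simp add: regularized_upper_Gamma_def upper_Gamma_nonpos)
qed

lemma summable_exp_series_bounded:
  fixes r :: "nat \<Rightarrow> real"
  assumes "\<And>j. \<bar>r j\<bar> \<le> 1"
  shows "summable (\<lambda>j. r j / fact j * x ^ j)"
proof (rule summable_comparison_test')
  show "summable (\<lambda>j. \<bar>x\<bar> ^ j / fact j)"
    using summable_exp[of "\<bar>x\<bar>"] by (simp add: field_simps)
  show "norm (r j / fact j * x ^ j) \<le> \<bar>x\<bar> ^ j / fact j" for j
    using mult_right_mono[OF assms[of j], of "\<bar>x\<bar> ^ j / fact j"]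
    by (simp add: abs_mult power_abs field_simps)
qed

lemma isCont_exp_series_bounded:
  fixes r :: "nat \<Rightarrow> real"
  assumes "\<And>j. \<bar>r j\<bar> \<le> 1"
  shows "isCont (\<lambda>x. \<Sum>j. r j / fact j * x ^ j) x"
  by (rule isCont_powser[OF summable_exp_series_bounded[OF assms, where x = "\<bar>x\<bar> + 1"]]) simp

lemma marcum_series_eq:
  assumes m: "m > 0"
  shows "marcum_series m \<alpha> y
    = ennreal (exp (- \<alpha>\<^sup>2/2) * (\<Sum>j. regularized_upper_Gamma (real j + m) y / fact j * (\<alpha>\<^sup>2/2) ^ j))"
proof -
  let ?r = "\<lambda>j. regularized_upper_Gamma (real j + m) y"
  have r: "0 \<le> ?r j" "?r j \<le> 1" for j
    using regularized_upper_Gamma_bounds[of "real j + m"] m by auto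
  have summable: "summable (\<lambda>j. ?r j / fact j * (\<alpha>\<^sup>2/2) ^ j)"
    by (rule summable_exp_series_bounded) (use r in auto)
  have "ennreal (marcum_weight m \<alpha> j) * upper_Gamma (real j + m) y
      = ennreal (exp (- \<alpha>\<^sup>2/2) * (?r j / fact j * (\<alpha>\<^sup>2/2) ^ j))" for j
  proof -
    have "upper_Gamma (real j + m) y = ennreal (enn2real (upper_Gamma (real j + m) y))"
      using upper_Gamma_finite[of "real j + m" y] m by (simp add: ennreal_enn2real_if)
    moreover have "marcum_weight m \<alpha> j * enn2real (upper_Gamma (real j + m) y)
        = exp (- \<alpha>\<^sup>2/2) * (?r j / fact j * (\<alpha>\<^sup>2/2) ^ j)"
      using Gamma_real_pos[of "real j + m"] m
      by (simp add: marcum_weight_def regularized_upper_Gamma_def field_simps)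
    ultimately show ?thesis
      using ennreal_mult'[OF marcum_weight_nonneg[OF m, of \<alpha> j]] by metis
  qed
  then have "marcum_series m \<alpha> y = (\<Sum>j. ennreal (exp (- \<alpha>\<^sup>2/2) * (?r j / fact j * (\<alpha>\<^sup>2/2) ^ j)))"
    by (simp add: marcum_series_def)
  also have "\<dots> = ennreal (\<Sum>j. exp (- \<alpha>\<^sup>2/2) * (?r j / fact j * (\<alpha>\<^sup>2/2) ^ j))"
    using r by (intro suminf_ennreal2 summable_mult summable) auto
  finally show ?thesis
    by (simp only: suminf_mult[OF summable])
qed

lemma enn2real_marcum_series:
  assumes m: "m > 0"
  shows "enn2real (marcum_series m \<alpha> y)
    = exp (- \<alpha>\<^sup>2/2) * (\<Sum>j. regularized_upper_Gamma (real j + m) y / fact j * (\<alpha>\<^sup>2/2) ^ j)"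
proof -
  have "0 \<le> (\<Sum>j. regularized_upper_Gamma (real j + m) y / fact j * (\<alpha>\<^sup>2/2) ^ j)"
    using m regularized_upper_Gamma_bounds
    by (intro suminf_nonneg summable_exp_series_bounded) (auto simp: abs_le_iff)
  then show ?thesis
    by (simp add: marcum_series_eq[OF m])
qed

lemma marcum_series_finite: "m > 0 \<Longrightarrow> marcum_series m \<alpha> y \<noteq> \<top>"
  by (simp add: marcum_series_eq)

lemma marcum_series_nonpos:
  assumes "m > 0" and "y \<le> 0"
  shows "marcum_series m \<alpha> y = 1"
proof -
  have "(\<Sum>j. 1 / fact j * (\<alpha>\<^sup>2/2) ^ j) = exp (\<alpha>\<^sup>2/2)"
    using exp_converges[of "\<alpha>\<^sup>2/2"] by (simp add: sums_iff field_simps)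
  then show ?thesis
    using assms by (simp add: marcum_series_eq regularized_upper_Gamma_nonpos exp_minus)
qed

lemma marcum_Q_eq_series:
  assumes m: "m > 0"
  shows "marcum_Q m a \<beta> = enn2real (marcum_series m \<bar>a\<bar> (\<beta>\<^sup>2/2))"
proof (cases "a = 0")
  case False
  then show ?thesis
    using marcum_Q_pos_eq_series[OF m, of "\<bar>a\<bar>" "\<bar>\<beta>\<bar>"] by (simp add: marcum_Q_def)
next
  case True
  define F where "F \<alpha> = enn2real (marcum_series m \<alpha> (\<beta>\<^sup>2/2))" for \<alpha>
  \<comment> \<open>\<open>marcum_Q\<close> at \<open>0\<close> is a one-sided limit; the series form extends continuously to \<open>\<alpha> = 0\<close>.\<close>
  have "isCont F 0"
    unfolding F_def enn2real_marcum_series[OF m] using m regularized_upper_Gamma_bounds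
    by (intro continuous_intros isCont_o2[OF _ isCont_exp_series_bounded]) (auto simp: abs_le_iff)
  then have "(F \<longlongrightarrow> F 0) (at_right 0)"
    by (simp add: isCont_def filterlim_at_split)
  moreover have "eventually (\<lambda>\<alpha>. F \<alpha> = marcum_Q_pos m \<alpha> \<bar>\<beta>\<bar>) (at_right 0)"
    using eventually_at_right_less
    by eventually_elim (simp add: F_def marcum_Q_pos_eq_series[OF m])
  ultimately have "((\<lambda>\<alpha>. marcum_Q_pos m \<alpha> \<bar>\<beta>\<bar>) \<longlongrightarrow> F 0) (at_right 0)"
    by (rule Lim_transform_eventually)
  then show ?thesis
    using True by (simp add: marcum_Q_def F_def tendsto_Lim)
qed

section \<open>Transform of the incomplete Gamma function\<close>

lemma nn_integral_power_exp:
  assumes "p > 0"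
  shows "(\<integral>\<^sup>+x. ennreal (x ^ j * exp (- p * x)) * indicator {0<..} x \<partial>lborel) = ennreal (fact j / p ^ Suc j)"
proof -
  have "(\<integral>\<^sup>+x. ennreal (x ^ j * exp (- p * x)) * indicator {0<..} x \<partial>lborel)
     = (\<integral>\<^sup>+x. ennreal (if 0 < x then x powr (real (Suc j) - 1) * exp (- p * x) else 0) \<partial>lborel)"
    by (intro nn_integral_cong) (simp add: powr_realpow split: split_indicator)
  also have "\<dots> = ennreal (fact j / p ^ Suc j)"
    using nn_integral_powr_exp_scaled[of "real (Suc j)" p] powr_realpow[of p "Suc j"] Gamma_fact[of j] assms
    by simp
  finally show ?thesis .
qed

lemma nn_integral_power_exp_atMost:
  assumes p: "p > 0"
  shows "(\<integral>\<^sup>+x. ennreal (x ^ j * exp (- p * x)) * indicator {0<..} x * indicator {..c} x \<partial>lborel)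
     = ennreal (fact j / p ^ Suc j) * ennreal (erlang_CDF j p c)"
proof -
  have "ennreal (x ^ j * exp (- p * x)) * indicator {0<..} x * indicator {..c} x
      = ennreal (fact j / p ^ Suc j) * (ennreal (erlang_density j p x) * indicator {..c} x)"
    if "x \<noteq> 0" for x :: real
  proof (cases "x > 0")
    case True
    have "x ^ j * exp (- p * x) = fact j / p ^ Suc j * erlang_density j p x"
      using True p by (simp add: erlang_density_def field_simps)
    then have "ennreal (x ^ j * exp (- p * x)) = ennreal (fact j / p ^ Suc j) * ennreal (erlang_density j p x)"
      using ennreal_mult'[of "fact j / p ^ Suc j" "erlang_density j p x"] p by simp
    then show ?thesis
      using True by (simp add: mult.assoc)
  next
    case False
    with that show ?thesis
      by (simp add: erlang_density_def)
  qed
  then have "(\<integral>\<^sup>+x. ennreal (x ^ j * exp (- p * x)) * indicator {0<..} x * indicator {..c} x \<partial>lborel)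
      = (\<integral>\<^sup>+x. ennreal (fact j / p ^ Suc j) * (ennreal (erlang_density j p x) * indicator {..c} x) \<partial>lborel)"
    by (intro nn_integral_cong_AE eventually_mono[OF AE_lborel_singleton[of 0]]) auto
  also have "\<dots> = ennreal (fact j / p ^ Suc j) * ennreal (erlang_CDF j p c)"
    using p by (simp add: nn_integral_cmult nn_integral_erlang_density)
  finally show ?thesis .
qed

lemma erlang_CDF_divide: "B > 0 \<Longrightarrow> erlang_CDF j p (u / B) = erlang_CDF j (p / B) u"
  by (simp add: erlang_CDF_def divide_less_0_iff)

lemma erlang_CDF_measurable [measurable]: "erlang_CDF j p \<in> borel_measurable borel"
  unfolding erlang_CDF_def[abs_def] by measurable

lemma nn_integral_power_exp_upper_Gamma:
  assumes p: "p > 0" and B: "B > 0"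
  shows "(\<integral>\<^sup>+x. ennreal (x ^ j * exp (- p * x)) * indicator {0<..} x * upper_Gamma n (B * x) \<partial>lborel)
    = ennreal (fact j / p ^ Suc j) * (\<integral>\<^sup>+u. ennreal (gamma_kernel n u) * ennreal (erlang_CDF j (p / B) u) \<partial>lborel)"
proof -
  let ?h = "\<lambda>x. ennreal (x ^ j * exp (- p * x)) * indicator {0<..} x"
  let ?H = "\<lambda>x u. ?h x * (ennreal (gamma_kernel n u) * (if x \<le> u / B then 1 else 0))"
  have "(\<integral>\<^sup>+x. ?h x * upper_Gamma n (B * x) \<partial>lborel) = (\<integral>\<^sup>+x. \<integral>\<^sup>+u. ?H x u \<partial>lborel \<partial>lborel)"
  proof (intro nn_integral_cong)
    fix x
    have "upper_Gamma n (B * x) = (\<integral>\<^sup>+u. ennreal (gamma_kernel n u) * (if x \<le> u / B then 1 else 0) \<partial>lborel)"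
      unfolding upper_Gamma_def using B
      by (intro nn_integral_cong) (simp add: field_simps split: split_indicator)
    then show "?h x * upper_Gamma n (B * x) = (\<integral>\<^sup>+u. ?H x u \<partial>lborel)"
      by (simp add: nn_integral_cmult)
  qed
  also have "\<dots> = (\<integral>\<^sup>+u. \<integral>\<^sup>+x. ?H x u \<partial>lborel \<partial>lborel)"
    by (rule lborel_pair.Fubini') measurable
  also have "\<dots> = (\<integral>\<^sup>+u. ennreal (gamma_kernel n u)
      * (ennreal (fact j / p ^ Suc j) * ennreal (erlang_CDF j (p / B) u)) \<partial>lborel)"
  proof (intro nn_integral_cong)
    fix u
    have "(\<integral>\<^sup>+x. ?H x u \<partial>lborel) = ennreal (gamma_kernel n u) * (\<integral>\<^sup>+x. ?h x * indicator {..u / B} x \<partial>lborel)"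
      by (subst nn_integral_cmult[symmetric]) (auto intro!: nn_integral_cong simp: mult.commute split: split_indicator)
    then show "(\<integral>\<^sup>+x. ?H x u \<partial>lborel)
        = ennreal (gamma_kernel n u) * (ennreal (fact j / p ^ Suc j) * ennreal (erlang_CDF j (p / B) u))"
      using nn_integral_power_exp_atMost[OF p, of j "u / B"] erlang_CDF_divide[OF B] by simp
  qed
  also have "\<dots> = ennreal (fact j / p ^ Suc j) * (\<integral>\<^sup>+u. ennreal (gamma_kernel n u) * ennreal (erlang_CDF j (p / B) u) \<partial>lborel)"
    by (subst nn_integral_cmult[symmetric]) (auto simp: mult_ac)
  finally show ?thesis .
qed


\<comment> \<open>\<open>\<Gamma>(n)\<close> times the negative binomial probability of \<open>l\<close> with parameters \<open>n\<close> and \<open>1 / (1 + q)\<close>.\<close>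
definition gamma_poisson_weight :: "real \<Rightarrow> real \<Rightarrow> nat \<Rightarrow> real" where
  "gamma_poisson_weight q n l = q ^ l / fact l * Gamma (n + real l) / (1 + q) powr (n + real l)"

lemma gamma_poisson_weight_nonneg: "q > 0 \<Longrightarrow> n > 0 \<Longrightarrow> gamma_poisson_weight q n l \<ge> 0"
  unfolding gamma_poisson_weight_def by (simp add: Gamma_real_pos less_imp_le)

lemma nn_integral_gamma_kernel_poisson:
  assumes n: "n > 0" and q: "q > 0"
  shows "(\<integral>\<^sup>+u. ennreal (gamma_kernel n u * ((q * u) ^ l * exp (- (q * u)) / fact l)) \<partial>lborel)
     = ennreal (gamma_poisson_weight q n l)"
proof -
  have "ennreal (gamma_kernel n u * ((q * u) ^ l * exp (- (q * u)) / fact l))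
     = ennreal (q ^ l / fact l) * ennreal (if 0 < u then u powr (n + real l - 1) * exp (- (1 + q) * u) else 0)" for u
  proof (cases "u > 0")
    case True
    have "u powr (n + real l - 1) = u powr (n - 1) * u ^ l"
      using True by (simp add: powr_add[symmetric] powr_realpow[symmetric] algebra_simps)
    moreover have "exp (- (1 + q) * u) = exp (- u) * exp (- (q * u))"
      by (simp add: exp_add[symmetric] algebra_simps)
    ultimately have "gamma_kernel n u * ((q * u) ^ l * exp (- (q * u)) / fact l)
        = q ^ l / fact l * (u powr (n + real l - 1) * exp (- (1 + q) * u))"
      using True by (simp add: gamma_kernel_def power_mult_distrib field_simps)
    then show ?thesis
      using True q by (simp add: ennreal_mult'[symmetric])
  qed (simp add: gamma_kernel_def)
  then have "(\<integral>\<^sup>+u. ennreal (gamma_kernel n u * ((q * u) ^ l * exp (- (q * u)) / fact l)) \<partial>lborel)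
      = ennreal (q ^ l / fact l) * ennreal (Gamma (n + real l) / (1 + q) powr (n + real l))"
    using nn_integral_powr_exp_scaled[of "n + real l" "1 + q"] n q by (simp add: nn_integral_cmult)
  also have "\<dots> = ennreal (gamma_poisson_weight q n l)"
    using q by (simp add: gamma_poisson_weight_def ennreal_mult'[symmetric])
  finally show ?thesis .
qed

lemma nn_integral_gamma_kernel_erlang_CDF_split:
  assumes n: "n > 0" and q: "q > 0"
  shows "ennreal (Gamma n) = (\<integral>\<^sup>+u. ennreal (gamma_kernel n u) * ennreal (erlang_CDF j q u) \<partial>lborel)
    + ennreal (\<Sum>l\<le>j. gamma_poisson_weight q n l)"
proof -
  let ?P = "\<lambda>u l. gamma_kernel n u * ((q * u) ^ l * exp (- (q * u)) / fact l)"
  \<comment> \<open>For \<open>u > 0\<close> the Erlang CDF is one minus a Poisson sum; for \<open>u \<le> 0\<close> the kernel vanishes.\<close>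
  have "ennreal (gamma_kernel n u) = ennreal (gamma_kernel n u) * ennreal (erlang_CDF j q u) + (\<Sum>l\<le>j. ennreal (?P u l))" for u
  proof (cases "u > 0")
    case True
    have "erlang_CDF j q u = 1 - (\<Sum>l\<le>j. (q * u) ^ l * exp (- (q * u)) / fact l)"
      using True q by (simp add: erlang_CDF_def)
    then have "gamma_kernel n u = gamma_kernel n u * erlang_CDF j q u + (\<Sum>l\<le>j. ?P u l)"
      by (simp only: sum_distrib_left[symmetric] right_diff_distrib mult_1_right diff_add_cancel)
    then have "ennreal (gamma_kernel n u) = ennreal (gamma_kernel n u * erlang_CDF j q u + (\<Sum>l\<le>j. ?P u l))"
      by (rule arg_cong)
    also have "\<dots> = ennreal (gamma_kernel n u) * ennreal (erlang_CDF j q u) + (\<Sum>l\<le>j. ennreal (?P u l))"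
      using True q gamma_kernel_nonneg[of n u] by (simp add: ennreal_mult sum_nonneg)
    finally show ?thesis .
  qed (simp add: gamma_kernel_def)
  then have "ennreal (Gamma n) = (\<integral>\<^sup>+u. ennreal (gamma_kernel n u) * ennreal (erlang_CDF j q u)
      + (\<Sum>l\<le>j. ennreal (?P u l)) \<partial>lborel)"
    by (simp add: nn_integral_gamma_kernel[OF n, symmetric])
  also have "\<dots> = (\<integral>\<^sup>+u. ennreal (gamma_kernel n u) * ennreal (erlang_CDF j q u) \<partial>lborel)
      + (\<Sum>l\<le>j. \<integral>\<^sup>+u. ennreal (?P u l) \<partial>lborel)"
    by (simp add: nn_integral_add nn_integral_sum)
  also have "(\<Sum>l\<le>j. \<integral>\<^sup>+u. ennreal (?P u l) \<partial>lborel) = ennreal (\<Sum>l\<le>j. gamma_poisson_weight q n l)"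
    unfolding nn_integral_gamma_kernel_poisson[OF n q]
    using gamma_poisson_weight_nonneg[OF q n] by simp
  finally show ?thesis .
qed

lemma sum_gamma_poisson_weight_le_Gamma:
  assumes "n > 0" and "q > 0"
  shows "(\<Sum>l\<le>j. gamma_poisson_weight q n l) \<le> Gamma n"
proof -
  have "ennreal (\<Sum>l\<le>j. gamma_poisson_weight q n l) \<le> ennreal (Gamma n)"
    unfolding nn_integral_gamma_kernel_erlang_CDF_split[OF assms, of j] by simp
  then show ?thesis
    using Gamma_real_pos[OF assms(1)] by (simp add: ennreal_le_iff2)
qed

lemma nn_integral_gamma_kernel_erlang_CDF:
  assumes "n > 0" and "q > 0"
  shows "(\<integral>\<^sup>+u. ennreal (gamma_kernel n u) * ennreal (erlang_CDF j q u) \<partial>lborel)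
    = ennreal (Gamma n - (\<Sum>l\<le>j. gamma_poisson_weight q n l))"
proof -
  have "(\<integral>\<^sup>+u. ennreal (gamma_kernel n u) * ennreal (erlang_CDF j q u) \<partial>lborel)
      = ennreal (Gamma n) - ennreal (\<Sum>l\<le>j. gamma_poisson_weight q n l)"
    unfolding nn_integral_gamma_kernel_erlang_CDF_split[OF assms, of j]
    by simp
  also have "\<dots> = ennreal (Gamma n - (\<Sum>l\<le>j. gamma_poisson_weight q n l))"
    using gamma_poisson_weight_nonneg[OF assms(2,1)] by (intro ennreal_minus sum_nonneg) auto
  finally show ?thesis .
qed

section \<open>Summation over the mixture\<close>

definition marcum_laplace_term :: "real \<Rightarrow> real \<Rightarrow> real \<Rightarrow> nat \<Rightarrow> real" where
  "marcum_laplace_term m \<alpha> q l = exp (- \<alpha>\<^sup>2/2) * pochhammer m l / fact l * (q / (1 + q)) ^ l / (1 + q) powr m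
     * hyp1F1 (real l + m) m (\<alpha>\<^sup>2/2 / (1 + q))"

lemma sums_exp_real: "(\<lambda>j. x ^ j / fact j) sums exp (x :: real)"
  using exp_converges[of x] by (simp add: divide_inverse mult.commute scaleR_conv_of_real)

lemma marcum_weight_mult_Gamma:
  assumes "m > 0"
  shows "marcum_weight m \<alpha> i * Gamma (real i + m) = exp (- \<alpha>\<^sup>2/2) * (\<alpha>\<^sup>2/2) ^ i / fact i"
proof -
  have "Gamma (real i + m) > 0"
    using assms by (intro Gamma_real_pos) simp
  then have "Gamma (real i + m) \<noteq> 0"
    by linarith
  then show ?thesis
    by (simp add: marcum_weight_def)
qed

lemma sums_marcum_weight_mult_Gamma:
  assumes "m > 0"
  shows "(\<lambda>i. marcum_weight m \<alpha> i * Gamma (real i + m)) sums 1"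
proof -
  have "(\<lambda>i. (\<alpha>\<^sup>2/2) ^ i / fact i) sums exp (\<alpha>\<^sup>2/2)"
    by (rule sums_exp_real)
  from sums_mult[OF this, of "exp (- \<alpha>\<^sup>2/2)"] show ?thesis
    unfolding marcum_weight_mult_Gamma[OF assms] by (simp flip: exp_add)
qed

lemma marcum_weight_mult_gamma_poisson_weight:
  assumes m: "m > 0" and q: "q > 0"
  shows "marcum_weight m \<alpha> i * gamma_poisson_weight q (real i + m) l
    = exp (- \<alpha>\<^sup>2/2) * pochhammer m l / fact l * (q / (1 + q)) ^ l / (1 + q) powr m
      * (pochhammer (real l + m) i / pochhammer m i * (\<alpha>\<^sup>2/2 / (1 + q)) ^ i / fact i)"
proof -
  have "Gamma (real i + m) > 0"
    using m by (intro Gamma_real_pos) simp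
  moreover have "real i + m \<notin> \<int>\<^sub>\<le>\<^sub>0"
    using m nonpos_Ints_nonpos[of "real i + m"] by linarith
  ultimately have Gamma: "Gamma (real i + m + real l) = pochhammer (real i + m) l * Gamma (real i + m)"
    using pochhammer_Gamma[of "real i + m" l] by simp
  have "pochhammer m i * pochhammer (real i + m) l = pochhammer m l * pochhammer (real l + m) i"
    by (metis add.commute pochhammer_product')
  moreover have "pochhammer m i > 0"
    using m by (rule pochhammer_pos)
  ultimately have poch: "pochhammer (real i + m) l = pochhammer m l * pochhammer (real l + m) i / pochhammer m i"
    by (simp add: field_simps)
  have "(1 + q) powr (real i + m + real l) = (1 + q) powr real i * (1 + q) powr real l * (1 + q) powr m"
    by (simp only: powr_add mult_ac)
  also have "\<dots> = (1 + q) ^ i * (1 + q) ^ l * (1 + q) powr m"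
    using q by (simp only: powr_realpow add_pos_pos zero_less_one)
  finally have powr: "(1 + q) powr (real i + m + real l) = (1 + q) ^ i * (1 + q) ^ l * (1 + q) powr m" .
  have field: "E * c ^ i / (fact i * G) * (q ^ l / fact l * (P * Q / R * G) / (t ^ i * t ^ l * T))
      = E * P / fact l * (q / t) ^ l / T * (Q / R * (c / t) ^ i / fact i)"
    if "G \<noteq> 0" "R \<noteq> 0" "t \<noteq> 0" "T \<noteq> 0" for E c G P Q R t T :: real
    using that by (simp add: power_divide field_simps)
  show ?thesis
    unfolding marcum_weight_def gamma_poisson_weight_def Gamma poch powr
    using q \<open>pochhammer m i > 0\<close> \<open>Gamma (real i + m) > 0\<close>
    by (intro field) auto
qed


lemma gamma_poisson_weight_le_Gamma:
  assumes "n > 0" and "q > 0"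
  shows "gamma_poisson_weight q n l \<le> Gamma n"
proof -
  have "gamma_poisson_weight q n l \<le> (\<Sum>l'\<le>l. gamma_poisson_weight q n l')"
    using gamma_poisson_weight_nonneg[OF assms(2,1)] by (intro member_le_sum) auto
  also have "\<dots> \<le> Gamma n"
    by (rule sum_gamma_poisson_weight_le_Gamma[OF assms])
  finally show ?thesis .
qed

lemma sums_marcum_weight_mult_gamma_poisson_weight:
  assumes m: "m > 0" and q: "q > 0"
  shows "(\<lambda>i. marcum_weight m \<alpha> i * gamma_poisson_weight q (real i + m) l) sums marcum_laplace_term m \<alpha> q l"
proof -
  define K where "K = exp (- \<alpha>\<^sup>2/2) * pochhammer m l / fact l * (q / (1 + q)) ^ l / (1 + q) powr m"
  define h where "h i = pochhammer (real l + m) i / pochhammer m i * (\<alpha>\<^sup>2/2 / (1 + q)) ^ i / fact i" for i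
  have product: "marcum_weight m \<alpha> i * gamma_poisson_weight q (real i + m) l = K * h i" for i
    unfolding K_def h_def by (rule marcum_weight_mult_gamma_poisson_weight[OF m q])
  have "K > 0"
    unfolding K_def using m q by (simp add: pochhammer_pos)
  have "summable (\<lambda>i. marcum_weight m \<alpha> i * gamma_poisson_weight q (real i + m) l)"
  proof (rule summable_comparison_test')
    show "summable (\<lambda>i. marcum_weight m \<alpha> i * Gamma (real i + m))"
      using sums_marcum_weight_mult_Gamma[OF m] by (rule sums_summable)
    show "norm (marcum_weight m \<alpha> i * gamma_poisson_weight q (real i + m) l) \<le> marcum_weight m \<alpha> i * Gamma (real i + m)" for i
      using m q marcum_weight_nonneg[OF m, of \<alpha> i] gamma_poisson_weight_nonneg[of q "real i + m" l]
        gamma_poisson_weight_le_Gamma[of "real i + m" q l]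
      by (simp add: abs_mult mult_left_mono)
  qed
  then have "summable h"
    using summable_divide[of _ K] \<open>K > 0\<close> by (simp add: product)
  then have "h sums hyp1F1 (real l + m) m (\<alpha>\<^sup>2/2 / (1 + q))"
    unfolding hyp1F1_def h_def by (rule summable_sums)
  from sums_mult[OF this, of K] show ?thesis
    unfolding product marcum_laplace_term_def K_def .
qed

lemma sum_marcum_laplace_term_le_1:
  assumes m: "m > 0" and q: "q > 0"
  shows "(\<Sum>l\<le>j. marcum_laplace_term m \<alpha> q l) \<le> 1"
proof (rule sums_le)
  show "(\<lambda>i. \<Sum>l\<le>j. marcum_weight m \<alpha> i * gamma_poisson_weight q (real i + m) l)
      sums (\<Sum>l\<le>j. marcum_laplace_term m \<alpha> q l)"
    by (intro sums_sum sums_marcum_weight_mult_gamma_poisson_weight m q)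
  show "(\<lambda>i. marcum_weight m \<alpha> i * Gamma (real i + m)) sums 1"
    by (rule sums_marcum_weight_mult_Gamma[OF m])
  show "(\<Sum>l\<le>j. marcum_weight m \<alpha> i * gamma_poisson_weight q (real i + m) l) \<le> marcum_weight m \<alpha> i * Gamma (real i + m)" for i
    using m q marcum_weight_nonneg[OF m, of \<alpha> i] sum_gamma_poisson_weight_le_Gamma[of "real i + m" q j]
    by (simp add: mult_left_mono flip: sum_distrib_left)
qed

lemma nn_integral_power_exp_marcum_series:
  assumes m: "m > 0" and p: "p > 0" and B: "B > 0"
  shows "(\<integral>\<^sup>+x. ennreal (x ^ j * exp (- p * x)) * indicator {0<..} x * marcum_series m \<alpha> (B * x) \<partial>lborel)
    = ennreal (fact j / p ^ Suc j * (1 - (\<Sum>l\<le>j. marcum_laplace_term m \<alpha> (p / B) l)))"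
proof -
  let ?h = "\<lambda>x. ennreal (x ^ j * exp (- p * x)) * indicator {0<..} x"
  let ?w = "marcum_weight m \<alpha>"
  let ?S = "\<lambda>i. \<Sum>l\<le>j. gamma_poisson_weight (p / B) (real i + m) l"
  define c where "c = fact j / p ^ Suc j"
  have q: "p / B > 0"
    using p B by simp
  have c: "c \<ge> 0"
    using p by (simp add: c_def)
  have S: "?S i \<le> Gamma (real i + m)" for i
    using m q by (intro sum_gamma_poisson_weight_le_Gamma) auto
  have "(\<integral>\<^sup>+x. ?h x * marcum_series m \<alpha> (B * x) \<partial>lborel)
      = (\<integral>\<^sup>+x. (\<Sum>i. ennreal (?w i) * (?h x * upper_Gamma (real i + m) (B * x))) \<partial>lborel)"
    unfolding marcum_series_def ennreal_suminf_cmult[symmetric] by (simp add: mult_ac)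
  also have "\<dots> = (\<Sum>i. ennreal (?w i) * (\<integral>\<^sup>+x. ?h x * upper_Gamma (real i + m) (B * x) \<partial>lborel))"
    by (simp add: nn_integral_suminf nn_integral_cmult)
  also have "\<dots> = (\<Sum>i. ennreal (?w i * (c * (Gamma (real i + m) - ?S i))))"
  proof (intro suminf_cong)
    fix i
    have n: "real i + m > 0"
      using m by simp
    have "(\<integral>\<^sup>+x. ?h x * upper_Gamma (real i + m) (B * x) \<partial>lborel) = ennreal (c * (Gamma (real i + m) - ?S i))"
      unfolding nn_integral_power_exp_upper_Gamma[OF p B] nn_integral_gamma_kernel_erlang_CDF[OF n q]
      using p S[of i] by (simp add: c_def flip: ennreal_mult)
    then show "ennreal (?w i) * (\<integral>\<^sup>+x. ?h x * upper_Gamma (real i + m) (B * x) \<partial>lborel)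
        = ennreal (?w i * (c * (Gamma (real i + m) - ?S i)))"
      using ennreal_mult'[OF marcum_weight_nonneg[OF m, of \<alpha> i]] by simp
  qed
  also have "\<dots> = ennreal (c * (1 - (\<Sum>l\<le>j. marcum_laplace_term m \<alpha> (p / B) l)))"
  proof (rule suminf_ennreal_eq)
    show "0 \<le> ?w i * (c * (Gamma (real i + m) - ?S i))" for i
      using S[of i] marcum_weight_nonneg[OF m] c by simp
    have "(\<lambda>i. ?w i * Gamma (real i + m) - (\<Sum>l\<le>j. ?w i * gamma_poisson_weight (p / B) (real i + m) l))
        sums (1 - (\<Sum>l\<le>j. marcum_laplace_term m \<alpha> (p / B) l))"
      by (intro sums_diff sums_sum sums_marcum_weight_mult_Gamma sums_marcum_weight_mult_gamma_poisson_weight m q)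
    from sums_mult[OF this, of c]
    show "(\<lambda>i. ?w i * (c * (Gamma (real i + m) - ?S i))) sums (c * (1 - (\<Sum>l\<le>j. marcum_laplace_term m \<alpha> (p / B) l)))"
      by (simp add: sum_distrib_left algebra_simps)
  qed
  finally show ?thesis
    unfolding c_def .
qed

lemma set_integral_marcum_Q_eq_nn_integral:
  assumes m: "m > 0"
  shows "(LINT x:{0<..}|lborel. x ^ j * marcum_Q m a (b * sqrt x) * exp (- p * x))
    = enn2real (\<integral>\<^sup>+x. ennreal (x ^ j * exp (- p * x)) * indicator {0<..} x * marcum_series m \<bar>a\<bar> (b\<^sup>2/2 * x) \<partial>lborel)"
proof -
  let ?H = "\<lambda>x. ennreal (x ^ j * exp (- p * x)) * indicator {0<..} x * marcum_series m \<bar>a\<bar> (b\<^sup>2/2 * x)"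
  have "indicator {0<..} x * (x ^ j * marcum_Q m a (b * sqrt x) * exp (- p * x)) = enn2real (?H x)" for x :: real
  proof (cases "x > 0")
    case True
    then have "marcum_Q m a (b * sqrt x) = enn2real (marcum_series m \<bar>a\<bar> (b\<^sup>2/2 * x))"
      by (simp add: marcum_Q_eq_series[OF m] power_mult_distrib)
    then show ?thesis
      using True by (simp add: enn2real_mult mult_ac)
  qed simp
  moreover have "ennreal (enn2real (?H x)) = ?H x" for x
    using marcum_series_finite[OF m]
    by (simp add: ennreal_enn2real_if ennreal_mult_eq_top_iff split: split_indicator)
  ultimately show ?thesis
    unfolding set_lebesgue_integral_def real_scaleR_def
    by (simp add: integral_eq_nn_integral)
qed

lemma marcum_laplace_term_eq:
  assumes b: "b \<noteq> 0" and p: "p > 0"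
  shows "marcum_laplace_term m a (p / (b\<^sup>2/2)) l
    = (b\<^sup>2) powr m * exp (- a\<^sup>2 / 2) / (b\<^sup>2 + 2 * p) powr m
      * (pochhammer m l * (2 * p) ^ l / (fact l * (b\<^sup>2 + 2 * p) ^ l)
         * hyp1F1 (real l + m) m (a\<^sup>2 * b\<^sup>2 / (2 * b\<^sup>2 + 4 * p)))"
proof -
  have b2: "b\<^sup>2 > 0"
    using b by simp
  have pos: "b\<^sup>2 + 2 * p > 0"
    using b2 p by linarith
  have q: "1 + p / (b\<^sup>2/2) = (b\<^sup>2 + 2 * p) / b\<^sup>2"
    and "p / (b\<^sup>2/2) / ((b\<^sup>2 + 2 * p) / b\<^sup>2) = 2 * p / (b\<^sup>2 + 2 * p)"
    and "a\<^sup>2/2 / ((b\<^sup>2 + 2 * p) / b\<^sup>2) = a\<^sup>2 * b\<^sup>2 / (2 * b\<^sup>2 + 4 * p)"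
    and "((b\<^sup>2 + 2 * p) / b\<^sup>2) powr m = (b\<^sup>2 + 2 * p) powr m / (b\<^sup>2) powr m"
    using b2 p pos by (simp_all add: field_simps powr_divide)
  moreover have "(b\<^sup>2 + 2 * p) powr m > 0" "(b\<^sup>2) powr m > 0"
    using b2 pos by simp_all
  ultimately show ?thesis
    unfolding marcum_laplace_term_def q by (simp add: power_divide field_simps)
qed

theorem theorem2:
  fixes a b m p :: real and k :: nat
  assumes "m > 0" and "p > 0" and "k \<ge> 1"
  shows "(LINT x:{0<..}|lborel. x ^ (k - 1) * marcum_Q m a (b * sqrt x) * exp (- p * x))
    = Gamma (real k) / p ^ k
      - Gamma (real k) * (b\<^sup>2) powr m * exp (- a\<^sup>2 / 2) / (p ^ k * (b\<^sup>2 + 2 * p) powr m)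
        * (\<Sum>l<k. pochhammer m l * (2 * p) ^ l / (fact l * (b\<^sup>2 + 2 * p) ^ l)
                   * hyp1F1 (real l + m) m (a\<^sup>2 * b\<^sup>2 / (2 * b\<^sup>2 + 4 * p)))"
proof -
  obtain j where k: "k = Suc j"
    using assms(3) by (cases k) auto
  have Gamma: "Gamma (real (Suc j)) = fact j"
    using Gamma_fact[of j] by simp
  show ?thesis
  proof (cases "b = 0")
    case True
    \<comment> \<open>The correction term vanishes through the factor \<open>0 powr m = 0\<close>.\<close>
    then show ?thesis
      unfolding set_integral_marcum_Q_eq_nn_integral[OF assms(1)]
      using assms Gamma nn_integral_power_exp[OF assms(2), of j] by (simp add: marcum_series_nonpos k)
  next
    case False
    then have B: "b\<^sup>2/2 > 0" and q: "p / (b\<^sup>2/2) > 0"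
      using assms(2) by simp_all
    let ?T = "\<lambda>l. marcum_laplace_term m \<bar>a\<bar> (p / (b\<^sup>2/2)) l"
    have "fact j / p ^ Suc j * (1 - (\<Sum>l\<le>j. ?T l)) \<ge> 0"
      using sum_marcum_laplace_term_le_1[OF assms(1) q] assms(2) by simp
    then have "(LINT x:{0<..}|lborel. x ^ (k - 1) * marcum_Q m a (b * sqrt x) * exp (- p * x))
        = fact j / p ^ Suc j * (1 - (\<Sum>l\<le>j. ?T l))"
      unfolding k diff_Suc_1 set_integral_marcum_Q_eq_nn_integral[OF assms(1)]
        nn_integral_power_exp_marcum_series[OF assms(1,2) B] by simp
    then show ?thesis
      unfolding k Gamma lessThan_Suc_atMost marcum_laplace_term_eq[OF False assms(2)]
        sum_distrib_left[symmetric] power2_abs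
      using assms(2) by (simp add: field_simps)
  qed
qed

end
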